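(* Let $K\ge 2$, $M,N,d$ be positive integers with $d\le\min(M,N)$. If the symmetric system $(M\times N,d)^K$ is proper, then $$\frac{dK}{\min(M,N)}\le 1+\frac{\max(M,N)}{\min(M,N)}-\frac{d}{\min(M,N)}.$$
   Context: A $K$-user MIMO interference system $\Pi_{k=1}^K(M^{[k]}\times N^{[k]},d^{[k]})$ is specified by positive integers $M^{[k]}$, $N^{[k]}$ and $d^{[k]}\le\min(M^{[k]},N^{[k]})$, $k\in\mathcal{K}=\{1,\dots,K\}$; the symmetric system $(M\times N,d)^K$ has $M^{[k]}=M$, $N^{[k]}=N$, $d^{[k]}=d$ for all $k$. Its variables are: for each $j\in\mathcal K$ and $n\in\{1,\dots,d^{[j]}\}$ a set $T_{j,n}$ of $M^{[j]}-d^{[j]}$ variables, and for each $k\in\mathcal K$, $m\in\{1,\dots,d^{[k]}\}$ a set $R_{k,m}$ of $N^{[k]}-d^{[k]}$ variables, all pairwise disjoint. The equations are $E^{kj}_{mn}$ for $j,k\in\mathcal K$, $k\ne j$, $m\le d^{[k]}$, $n\le d^{[j]}$, forming the set $\mathcal E$, with $\mathrm{var}(E^{kj}_{mn})=T_{j,n}\cup R_{k,m}$. The system is proper if for every $S\subseteq\mathcal E$, $|S|\le\left|\bigcup_{E\in S}\mathrm{var}(E)\right|$. *)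

theory Defs
  imports Complex_Main
begin

text \<open>A K-user MIMO interference system is given by K and functions
  Ms, Ns, ds : users (indexed 1..K) to positive integers.
  Variables: VT j n i is the i-th variable of T_{j,n} (i < M_j - d_j);
  VR k m i is the i-th variable of R_{k,m} (i < N_k - d_k).
  Equations E^{kj}_{mn} are represented by tuples (k, j, m, n).\<close>

datatype ivar = VT nat nat nat | VR nat nat nat

definition Tset :: "(nat \<Rightarrow> nat) \<Rightarrow> (nat \<Rightarrow> nat) \<Rightarrow> nat \<Rightarrow> nat \<Rightarrow> ivar set" where
  "Tset Ms ds j n = {VT j n i | i. i < Ms j - ds j}"

definition Rset :: "(nat \<Rightarrow> nat) \<Rightarrow> (nat \<Rightarrow> nat) \<Rightarrow> nat \<Rightarrow> nat \<Rightarrow> ivar set" where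
  "Rset Ns ds k m = {VR k m i | i. i < Ns k - ds k}"

definition equations :: "nat \<Rightarrow> (nat \<Rightarrow> nat) \<Rightarrow> (nat \<times> nat \<times> nat \<times> nat) set" where
  "equations K ds = {(k, j, m, n) | k j m n.
      k \<in> {1..K} \<and> j \<in> {1..K} \<and> k \<noteq> j \<and> m \<in> {1..ds k} \<and> n \<in> {1..ds j}}"

fun var_of :: "(nat \<Rightarrow> nat) \<Rightarrow> (nat \<Rightarrow> nat) \<Rightarrow> (nat \<Rightarrow> nat) \<Rightarrow> nat \<times> nat \<times> nat \<times> nat \<Rightarrow> ivar set" where
  "var_of Ms Ns ds (k, j, m, n) = Tset Ms ds j n \<union> Rset Ns ds k m"

definition proper :: "nat \<Rightarrow> (nat \<Rightarrow> nat) \<Rightarrow> (nat \<Rightarrow> nat) \<Rightarrow> (nat \<Rightarrow> nat) \<Rightarrow> bool" where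
  "proper K Ms Ns ds \<longleftrightarrow>
     (\<forall>S \<subseteq> equations K ds. card S \<le> card (\<Union>E\<in>S. var_of Ms Ns ds E))"

end

theory Submission
  imports Defs
begin

text \<open>Applying properness to the set of all equations compares their number
  \<open>K(K-1)d\<^sup>2\<close> with the at most \<open>Kd(M-d) + Kd(N-d)\<close> variables they involve, so that
  \<open>(K-1)d \<le> M + N - 2d\<close>, i.e. \<open>(K+1)d \<le> M + N = min M N + max M N\<close>; dividing by
  \<open>min M N\<close> gives the claim.\<close>

lemma card_equations_symmetric:
  "card (equations K (\<lambda>_. d)) = K * (K - 1) * (d * d)"
proof -
  define D where "D = Sigma {1..K} (\<lambda>k. {1..K} - {k})"
  have eqs: "equations K (\<lambda>_. d) = (\<lambda>((k, j), (m, n)). (k, j, m, n)) ` (D \<times> ({1..d} \<times> {1..d}))"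
    unfolding equations_def D_def by (auto simp: image_iff)
  have inj: "inj_on (\<lambda>((k, j), (m, n)). (k, j, m, n)) (D \<times> ({1..d} \<times> {1..d}))"
    by (auto simp: inj_on_def)
  have "card D = K * (K - 1)"
    unfolding D_def by (subst card_SigmaI) auto
  then show ?thesis
    unfolding eqs card_image[OF inj] card_cartesian_product by simp
qed

lemma Tset_eq_image: "Tset Ms ds j n = VT j n ` {..<Ms j - ds j}"
  by (auto simp: Tset_def)

lemma Rset_eq_image: "Rset Ns ds k m = VR k m ` {..<Ns k - ds k}"
  by (auto simp: Rset_def)

lemma card_Tset: "card (Tset Ms ds j n) = Ms j - ds j"
  unfolding Tset_eq_image by (simp add: card_image inj_on_def)

lemma card_Rset: "card (Rset Ns ds k m) = Ns k - ds k"
  unfolding Rset_eq_image by (simp add: card_image inj_on_def)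

lemma card_variables_le:
  "card (\<Union>E\<in>equations K ds. var_of Ms Ns ds E)
     \<le> (\<Sum>j\<in>{1..K}. ds j * (Ms j - ds j)) + (\<Sum>k\<in>{1..K}. ds k * (Ns k - ds k))"
proof -
  define Ts where "Ts = (\<Union>j\<in>{1..K}. \<Union>n\<in>{1..ds j}. Tset Ms ds j n)"
  define Rs where "Rs = (\<Union>k\<in>{1..K}. \<Union>m\<in>{1..ds k}. Rset Ns ds k m)"
  have "(\<Union>E\<in>equations K ds. var_of Ms Ns ds E) \<subseteq> Ts \<union> Rs"
    unfolding equations_def Ts_def Rs_def by fastforce
  moreover have "finite (Ts \<union> Rs)"
    unfolding Ts_def Rs_def by (simp add: Tset_eq_image Rset_eq_image)
  ultimately have "card (\<Union>E\<in>equations K ds. var_of Ms Ns ds E) \<le> card (Ts \<union> Rs)"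
    by (rule card_mono[rotated])
  also have "\<dots> \<le> card Ts + card Rs"
    by (rule card_Un_le)
  also have "card Ts \<le> (\<Sum>j\<in>{1..K}. \<Sum>n\<in>{1..ds j}. card (Tset Ms ds j n))"
    unfolding Ts_def by (intro order.trans[OF card_UN_le] sum_mono card_UN_le) simp_all
  also have "card Rs \<le> (\<Sum>k\<in>{1..K}. \<Sum>m\<in>{1..ds k}. card (Rset Ns ds k m))"
    unfolding Rs_def by (intro order.trans[OF card_UN_le] sum_mono card_UN_le) simp_all
  finally show ?thesis
    by (simp add: card_Tset card_Rset)
qed

lemma proper_symmetric_imp_le:
  assumes "proper K (\<lambda>_. M) (\<lambda>_. N) (\<lambda>_. d)" and "d \<le> M" and "d \<le> N"
  shows "d * (K + 1) \<le> M + N"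
proof (cases "K = 0 \<or> d = 0")
  case True
  then show ?thesis using assms(2) by auto
next
  case False
  have "(K * d) * ((K - 1) * d) = card (equations K (\<lambda>_. d))"
    by (simp add: card_equations_symmetric mult_ac)
  also have "\<dots> \<le> card (\<Union>E\<in>equations K (\<lambda>_. d). var_of (\<lambda>_. M) (\<lambda>_. N) (\<lambda>_. d) E)"
    using assms(1) unfolding proper_def by blast
  also have "\<dots> \<le> K * d * (M - d) + K * d * (N - d)"
    using card_variables_le[where K = K and ds = "\<lambda>_. d" and Ms = "\<lambda>_. M" and Ns = "\<lambda>_. N"]
    by simp
  also have "\<dots> = (K * d) * ((M - d) + (N - d))"
    by (simp add: add_mult_distrib2)
  finally have "(K - 1) * d \<le> (M - d) + (N - d)"
    using False by simp
  then show ?thesis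
    using False assms(2,3) by (cases K) (auto simp: algebra_simps)
qed

theorem corollary1:
  fixes K M N d :: nat
  assumes "K \<ge> 2" and "M > 0" and "N > 0" and "d > 0" and "d \<le> min M N"
    and "proper K (\<lambda>_. M) (\<lambda>_. N) (\<lambda>_. d)"
  shows "real (d * K) / real (min M N)
           \<le> 1 + real (max M N) / real (min M N) - real d / real (min M N)"
proof -
  have "d * (K + 1) \<le> M + N"
    using proper_symmetric_imp_le assms(5,6) by simp
  then have "real (d * K) \<le> real (min M N) + real (max M N) - real d"
    by (simp add: min_def max_def algebra_simps flip: of_nat_add of_nat_mult)
  then have "real (d * K) / real (min M N)
      \<le> (real (min M N) + real (max M N) - real d) / real (min M N)"
    by (rule divide_right_mono) simp
  also have "\<dots> = 1 + real (max M N) / real (min M N) - real d / real (min M N)"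
    using assms(2,3) by (simp add: diff_divide_distrib add_divide_distrib)
  finally show ?thesis .
qed

end
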